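(* Fix $k\ge1$ and $\ell\ge1$. For every integer $j$ with $1+F_{2\ell+1}\le j\le F_{2\ell+3}-1$, $$q(j+1)-q(j)=q(j-F_{2\ell+1}+1)-q(j-F_{2\ell+1}).$$
   Context: Fibonacci numbers: $F_1=F_2=1$, $F_{n+1}=F_n+F_{n-1}$ for $n\ge2$. Chung–Graham decomposition: every positive integer $n$ has a unique representation $n=\sum_{i\ge1}c_iF_{2i}$ with $c_i\in\{0,1,2\}$, only finitely many nonzero, such that whenever $c_i=c_j=2$ with $i<j$ there is $k$ with $i<k<j$ and $c_k=0$. Let $\mathcal{CG}(n)$ be the set of $F_{2i}$ with $c_i\neq0$. For $k\ge1$, $A_{2k}=\{n\ge1:\min\mathcal{CG}(n)=F_{2k}\}$, and $q(1)<q(2)<q(3)<\cdots$ denote the elements of $A_{2k}$ listed in increasing order. *)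

theory Defs
  imports "HOL-Number_Theory.Fib" "HOL-Library.Infinite_Set"
begin

text \<open>Fibonacci numbers: library fib with fib 1 = fib 2 = 1.
  A Chung--Graham representation of n is a coefficient sequence c, indexed by i >= 1
  (we normalise c 0 = 0), with values in {0,1,2}, finite support,
  n = sum of c i * F(2i), and between any two 2's there is a 0.\<close>

definition is_CG_rep :: "nat \<Rightarrow> (nat \<Rightarrow> nat) \<Rightarrow> bool" where
  "is_CG_rep n c \<longleftrightarrow>
     c 0 = 0 \<and> (\<forall>i. c i \<le> 2) \<and> finite {i. c i \<noteq> 0} \<and>
     n = (\<Sum>i\<in>{i. c i \<noteq> 0}. c i * fib (2 * i)) \<and>
     (\<forall>i j. 1 \<le> i \<longrightarrow> i < j \<longrightarrow> c i = 2 \<longrightarrow> c j = 2 \<longrightarrow>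
        (\<exists>k. i < k \<and> k < j \<and> c k = 0))"

definition CG_coeffs :: "nat \<Rightarrow> nat \<Rightarrow> nat" where
  "CG_coeffs n = (THE c. is_CG_rep n c)"

definition CG :: "nat \<Rightarrow> nat set" where
  "CG n = {fib (2 * i) | i. 1 \<le> i \<and> CG_coeffs n i \<noteq> 0}"

definition A :: "nat \<Rightarrow> nat set" where
  "A k = {n. 1 \<le> n \<and> Min (CG n) = fib (2 * k)}"

text \<open>q k j = j-th smallest element of A_{2k} (1-indexed).\<close>
definition q :: "nat \<Rightarrow> nat \<Rightarrow> nat" where
  "q k j = enumerate (A k) (j - 1)"

end

theory Submission
  imports Defs
begin

text \<open>Every n < F(2m+2) has a unique Chung--Graham representation using only F(2), ..., F(2m).
  Putting the digit 1 (or 2, when n \<le> F(2) + ... + F(2m)) at index m+1 yields the representation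
  of F(2m+2) + n (or of 2 F(2m+2) + n) and leaves the least used index unchanged. Hence A_{2k} is
  invariant under these translations for m \<ge> k, and counting shows that A_{2k} has F(2l+1)
  elements below P = F(2k+2l) and F(2l) elements not exceeding F(2) + ... + F(2k+2l-2). So the
  enumeration satisfies q(F(2l+1) + i) = P + q(i) and q(2 F(2l+1) + i) = 2P + q(i) on these ranges,
  and the identity between gaps follows separately for j < 2 F(2l+1), j = 2 F(2l+1) and
  j > 2 F(2l+1).\<close>

definition even_fib :: "nat \<Rightarrow> nat" where
  "even_fib i = fib (2 * i)"

definition even_fib_sum :: "nat \<Rightarrow> nat" where
  "even_fib_sum m = (\<Sum>i=1..m. even_fib i)"

lemma even_fib_0 [simp]: "even_fib 0 = 0"
  and even_fib_1 [simp]: "even_fib (Suc 0) = 1"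
  by (simp_all add: even_fib_def)

lemma even_fib_Suc_Suc: "even_fib (Suc (Suc i)) + even_fib i = 3 * even_fib (Suc i)"
proof -
  have "2 * Suc (Suc i) = Suc (Suc (Suc (Suc (2 * i))))" "2 * Suc i = Suc (Suc (2 * i))"
    by simp_all
  then show ?thesis unfolding even_fib_def by simp
qed

lemma strict_mono_even_fib: "strict_mono even_fib"
  unfolding strict_mono_Suc_iff
proof
  fix i
  have "2 * Suc i = Suc (Suc (2 * i))" by simp
  moreover have "fib (Suc (2 * i)) > 0" by (simp add: fib_neq_0_nat)
  ultimately show "even_fib i < even_fib (Suc i)" unfolding even_fib_def by simp
qed

lemma even_fib_less_iff [simp]: "even_fib i < even_fib j \<longleftrightarrow> i < j"
  and even_fib_le_iff [simp]: "even_fib i \<le> even_fib j \<longleftrightarrow> i \<le> j"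
  and even_fib_eq_iff [simp]: "even_fib i = even_fib j \<longleftrightarrow> i = j"
  using strict_mono_even_fib by (simp_all add: strict_mono_less strict_mono_less_eq strict_mono_eq)

lemma even_fib_pos: "1 \<le> i \<Longrightarrow> 1 \<le> even_fib i"
  using even_fib_le_iff[of 1 i] by simp

lemma double_even_fib_le: "2 * even_fib (Suc m) \<le> even_fib (Suc (Suc m))"
  using even_fib_Suc_Suc[of m] even_fib_less_iff[of m "Suc m"] by linarith

lemma even_fib_sum_0 [simp]: "even_fib_sum 0 = 0"
  and even_fib_sum_Suc: "even_fib_sum (Suc m) = even_fib_sum m + even_fib (Suc m)"
  by (simp_all add: even_fib_sum_def)

lemma even_fib_sum_eq: "even_fib_sum m + even_fib m + 1 = even_fib (Suc m)"
proof (induction m)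
  case (Suc m)
  then show ?case using even_fib_Suc_Suc[of m] by (simp add: even_fib_sum_Suc)
qed simp

lemma even_fib_sum_less: "even_fib_sum m < even_fib (Suc m)"
  using even_fib_sum_eq[of m] by simp

lemma fib_even_Suc: "fib (2 * Suc d) = fib (2 * d + 1) + fib (2 * d)"
  using fib_plus_2[of "2 * d"] by simp

lemma fib_odd_Suc: "fib (2 * Suc d + 1) = 2 * fib (2 * d + 1) + fib (2 * d)"
  using fib_plus_2[of "2 * d + 1"] fib_even_Suc[of d] by simp

definition card_below :: "nat set \<Rightarrow> nat \<Rightarrow> nat" where
  "card_below S b = card {y \<in> S. y < b}"

lemma card_below_translate:
  assumes "\<And>n. n < x \<Longrightarrow> P + n \<in> S \<longleftrightarrow> n \<in> S"
  shows "card_below S (P + x) = card_below S P + card_below S x"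
proof -
  have "{y \<in> S. y < P + x} = {y \<in> S. y < P} \<union> (\<lambda>n. P + n) ` {y \<in> S. y < x}"
  proof (intro set_eqI iffI)
    fix y assume y: "y \<in> {y \<in> S. y < P + x}"
    show "y \<in> {y \<in> S. y < P} \<union> (\<lambda>n. P + n) ` {y \<in> S. y < x}"
    proof (cases "y < P")
      case False
      then have "y = P + (y - P)" "y - P < x" using y by auto
      then show ?thesis using y assms[of "y - P"] by (metis (mono_tags) UnI2 image_eqI mem_Collect_eq)
    qed (use y in auto)
  qed (use assms in auto)
  moreover have "{y \<in> S. y < P} \<inter> (\<lambda>n. P + n) ` {y \<in> S. y < x} = {}" by auto
  ultimately show ?thesis
    unfolding card_below_def by (simp add: card_Un_disjoint card_image)
qed

lemma card_below_enumerate: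
  assumes "infinite S"
  shows "card_below S (enumerate S n) = n"
proof -
  have "{y \<in> S. y < enumerate S n} = enumerate S ` {..<n}"
  proof (intro set_eqI iffI)
    fix y assume y: "y \<in> {y \<in> S. y < enumerate S n}"
    then obtain t where "enumerate S t = y" using enumerate_Ex[OF assms] by blast
    then show "y \<in> enumerate S ` {..<n}" using y assms by auto
  qed (use assms enumerate_in_set in auto)
  moreover have "inj_on (enumerate S) {..<n}"
    using inj_enumerate[OF assms] by (rule inj_on_subset) simp
  ultimately show ?thesis by (simp add: card_below_def card_image)
qed

lemma enumerate_card_below:
  assumes "infinite S" "x \<in> S"
  shows "enumerate S (card_below S x) = x"
proof -
  obtain t where "enumerate S t = x" using enumerate_Ex[OF assms] by blast
  then show ?thesis using card_below_enumerate[OF assms(1), of t] by simp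
qed

lemma enumerate_less_iff:
  assumes "infinite S"
  shows "enumerate S i < b \<longleftrightarrow> i < card_below S b"
proof
  assume "enumerate S i < b"
  then have "card_below S (enumerate S i) < card_below S b"
    unfolding card_below_def using enumerate_in_set[OF assms]
    by (intro psubset_card_mono) auto
  then show "i < card_below S b" using card_below_enumerate[OF assms] by simp
next
  assume "i < card_below S b"
  show "enumerate S i < b"
  proof (rule ccontr)
    assume "\<not> enumerate S i < b"
    then have "card_below S b \<le> card_below S (enumerate S i)"
      unfolding card_below_def by (intro card_mono) auto
    then show False using \<open>i < card_below S b\<close> card_below_enumerate[OF assms] by simp
  qed
qed

lemma enumerate_translate:
  assumes "infinite S" "\<And>n. n < L \<Longrightarrow> P + n \<in> S \<longleftrightarrow> n \<in> S" "i < card_below S L"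
  shows "enumerate S (card_below S P + i) = P + enumerate S i"
proof -
  define x where "x = enumerate S i"
  have "x < L" using assms(1,3) enumerate_less_iff by (simp add: x_def)
  then have "P + x \<in> S" using assms(2) enumerate_in_set[OF assms(1)] by (simp add: x_def)
  moreover have "card_below S (P + x) = card_below S P + i"
    using card_below_translate[of x P S] assms(2) \<open>x < L\<close> card_below_enumerate[OF assms(1)]
    by (simp add: x_def)
  ultimately show ?thesis using enumerate_card_below[OF assms(1)] by (metis x_def)
qed

definition CG_admissible :: "(nat \<Rightarrow> nat) \<Rightarrow> bool" where
  "CG_admissible c \<longleftrightarrow> c 0 = 0 \<and> (\<forall>i. c i \<le> 2) \<and>
     (\<forall>i j. 1 \<le> i \<longrightarrow> i < j \<longrightarrow> c i = 2 \<longrightarrow> c j = 2 \<longrightarrow>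
        (\<exists>k. i < k \<and> k < j \<and> c k = 0))"

definition vanishes_above :: "(nat \<Rightarrow> nat) \<Rightarrow> nat \<Rightarrow> bool" where
  "vanishes_above c m \<longleftrightarrow> (\<forall>i>m. c i = 0)"

definition CG_value :: "(nat \<Rightarrow> nat) \<Rightarrow> nat \<Rightarrow> nat" where
  "CG_value c m = (\<Sum>i=1..m. c i * even_fib i)"

definition twos_closed :: "(nat \<Rightarrow> nat) \<Rightarrow> nat \<Rightarrow> bool" where
  "twos_closed c m \<longleftrightarrow> (\<forall>j\<le>m. c j = 2 \<longrightarrow> (\<exists>t. j < t \<and> t \<le> m \<and> c t = 0))"

lemma CG_value_0 [simp]: "CG_value c 0 = 0"
  and CG_value_Suc: "CG_value c (Suc m) = CG_value c m + c (Suc m) * even_fib (Suc m)"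
  by (simp_all add: CG_value_def)

lemma CG_value_upd: "CG_value (c(Suc m := v)) (Suc m) = CG_value c m + v * even_fib (Suc m)"
proof -
  have "CG_value (c(Suc m := v)) m = CG_value c m"
    unfolding CG_value_def by (rule sum.cong) auto
  then show ?thesis by (simp add: CG_value_Suc)
qed

lemma CG_value_ge: "1 \<le> i \<Longrightarrow> i \<le> m \<Longrightarrow> c i * even_fib i \<le> CG_value c m"
  unfolding CG_value_def by (rule member_le_sum) auto

lemma CG_value_bound:
  assumes "CG_admissible c"
  shows "CG_value c m < even_fib (Suc m) \<and> (twos_closed c m \<longrightarrow> CG_value c m \<le> even_fib_sum m)"
proof (induction m)
  case (Suc m)
  have IH: "CG_value c m < even_fib (Suc m)" "twos_closed c m \<Longrightarrow> CG_value c m \<le> even_fib_sum m"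
    using Suc by auto
  have top: "even_fib_sum m + 2 * even_fib (Suc m) + 1 = even_fib (Suc (Suc m))"
    using even_fib_sum_eq[of "Suc m"] by (simp add: even_fib_sum_Suc)
  consider "c (Suc m) = 0" | "c (Suc m) = 1" | "c (Suc m) = 2"
    using assms unfolding CG_admissible_def by (metis le_SucE le_0_eq One_nat_def Suc_1)
  then show ?case
  proof cases
    case 1
    have "CG_value c m < even_fib (Suc (Suc m))"
      using IH(1) even_fib_less_iff[of "Suc m" "Suc (Suc m)"] by linarith
    then show ?thesis using IH(1) 1 by (auto simp: CG_value_Suc even_fib_sum_Suc)
  next
    case 2
    have "twos_closed c m" if closed: "twos_closed c (Suc m)"
      unfolding twos_closed_def
    proof (intro allI impI)
      fix j assume "j \<le> m" "c j = 2"
      then obtain t where "j < t" "t \<le> Suc m" "c t = 0" using closed le_SucI unfolding twos_closed_def by blast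
      then show "\<exists>t>j. t \<le> m \<and> c t = 0" using 2 by (intro exI[of _ t]) (auto simp: le_Suc_eq)
    qed
    then show ?thesis using IH 2 double_even_fib_le[of m]
      by (auto simp: CG_value_Suc even_fib_sum_Suc)
  next
    case 3
    have "twos_closed c m"
      unfolding twos_closed_def
    proof (intro allI impI)
      fix j assume j: "j \<le> m" "c j = 2"
      then have "1 \<le> j" using assms unfolding CG_admissible_def by (metis less_one not_le zero_neq_numeral)
      then obtain t where "j < t" "t < Suc m" "c t = 0"
        using assms j 3 unfolding CG_admissible_def by (metis le_imp_less_Suc)
      then show "\<exists>t>j. t \<le> m \<and> c t = 0" by auto
    qed
    moreover have "\<not> twos_closed c (Suc m)" unfolding twos_closed_def using 3 by auto
    ultimately show ?thesis using IH(2) 3 top by (simp add: CG_value_Suc)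
  qed
qed simp

lemma CG_admissible_upd_0: "CG_admissible c \<Longrightarrow> CG_admissible (c(p := 0))"
  unfolding CG_admissible_def by (metis fun_upd_apply zero_neq_numeral)

lemma CG_admissible_extend:
  assumes "CG_admissible c" "vanishes_above c m" "v \<le> 2" "v = 2 \<Longrightarrow> twos_closed c m"
  shows "CG_admissible (c(Suc m := v))"
  unfolding CG_admissible_def
proof (intro conjI allI impI)
  show "(c(Suc m := v)) 0 = 0" "\<And>i. (c(Suc m := v)) i \<le> 2"
    using assms(1,3) by (auto simp: CG_admissible_def)
  fix i j assume ij: "1 \<le> i" "i < j" "(c(Suc m := v)) i = 2" "(c(Suc m := v)) j = 2"
  show "\<exists>k>i. k < j \<and> (c(Suc m := v)) k = 0"
  proof (cases "j = Suc m")
    case True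
    then have "i \<le> m" "c i = 2" "v = 2" using ij by auto
    then obtain t where "i < t" "t \<le> m" "c t = 0" using assms(4) unfolding twos_closed_def by blast
    then show ?thesis using True by (intro exI[of _ t]) auto
  next
    case False
    then have "c j = 2" using ij by auto
    then have "j \<le> m" using assms(2) unfolding vanishes_above_def by (metis not_le zero_neq_numeral)
    then have "c i = 2" using ij by auto
    obtain k where "i < k" "k < j" "c k = 0"
      using assms(1) ij \<open>c i = 2\<close> \<open>c j = 2\<close> unfolding CG_admissible_def by blast
    then show ?thesis using \<open>j \<le> m\<close> by (intro exI[of _ k]) auto
  qed
qed

lemma twos_closed_upd_1:
  assumes "twos_closed c m"
  shows "twos_closed (c(Suc m := 1)) (Suc m)"
  unfolding twos_closed_def
proof (intro allI impI)
  fix j assume "j \<le> Suc m" "(c(Suc m := 1)) j = 2"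
  then have "j \<le> m" "c j = 2" by (auto simp: le_Suc_eq split: if_splits)
  then obtain t where "j < t" "t \<le> m" "c t = 0" using assms unfolding twos_closed_def by blast
  then show "\<exists>t>j. t \<le> Suc m \<and> (c(Suc m := 1)) t = 0" by (intro exI[of _ t]) auto
qed

lemma twos_closed_Suc_if_vanishes: "vanishes_above c m \<Longrightarrow> twos_closed c (Suc m)"
  unfolding twos_closed_def vanishes_above_def
  by (metis le_Suc_eq lessI less_Suc_eq_le zero_neq_numeral)

lemma vanishes_above_upd: "vanishes_above c m \<Longrightarrow> vanishes_above (c(Suc m := v)) (Suc m)"
  by (simp add: vanishes_above_def)

text \<open>Greedy digits: the digit at index m+1 is min 2 (n div F(2m+2)). As F(2m+4) =
  2 F(2m+2) + F(2) + ... + F(2m) + 1, what remains after a digit 2 is at most F(2) + ... + F(2m),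
  and the invariant twos_closed, carried along for such small n, makes that digit 2 admissible.\<close>
lemma CG_rep_exists:
  "n < even_fib (Suc m) \<Longrightarrow> \<exists>c. CG_admissible c \<and> vanishes_above c m \<and> CG_value c m = n \<and>
     (n \<le> even_fib_sum m \<longrightarrow> twos_closed c m)"
proof (induction m arbitrary: n)
  case 0
  then show ?case
    by (intro exI[of _ "\<lambda>_. 0"]) (simp add: CG_admissible_def vanishes_above_def twos_closed_def)
next
  case (Suc m)
  define G where "G = even_fib (Suc m)"
  have top: "even_fib_sum m + 2 * G + 1 = even_fib (Suc (Suc m))"
    using even_fib_sum_eq[of "Suc m"] by (simp add: even_fib_sum_Suc G_def)
  have sum_less: "even_fib_sum m < G" using even_fib_sum_less by (simp add: G_def)
  obtain v where v: "v \<le> 2" "v * G \<le> n" "n - v * G < G"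
      "v = 2 \<Longrightarrow> n - v * G \<le> even_fib_sum m"
      "n \<le> even_fib_sum (Suc m) \<Longrightarrow> v \<noteq> 2 \<and> (v = 1 \<longrightarrow> n - v * G \<le> even_fib_sum m)"
  proof -
    consider "n < G" | "G \<le> n" "n < 2 * G" | "2 * G \<le> n" by linarith
    then show thesis
    proof cases
      case 1
      then show ?thesis using that[of 0] by simp
    next
      case 2
      then show ?thesis using that[of 1] by (simp add: even_fib_sum_Suc G_def)
    next
      case 3
      then show ?thesis using that[of 2] top sum_less Suc.prems by (simp add: even_fib_sum_Suc G_def)
    qed
  qed
  define r where "r = n - v * G"
  obtain c where c: "CG_admissible c" "vanishes_above c m" "CG_value c m = r"
      "r \<le> even_fib_sum m \<longrightarrow> twos_closed c m"
    using Suc.IH v(3) by (auto simp: G_def r_def)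
  show ?case
  proof (intro exI[of _ "c(Suc m := v)"] conjI impI)
    show "CG_admissible (c(Suc m := v))" using CG_admissible_extend c v by (simp add: r_def)
    show "vanishes_above (c(Suc m := v)) (Suc m)" using vanishes_above_upd c(2) .
    show "CG_value (c(Suc m := v)) (Suc m) = n" using CG_value_upd c(3) v by (simp add: r_def G_def)
    assume "n \<le> even_fib_sum (Suc m)"
    then consider "v = 0" | "v = 1" "r \<le> even_fib_sum m" using v by (force simp: r_def)
    then show "twos_closed (c(Suc m := v)) (Suc m)"
    proof cases
      case 1
      have "vanishes_above (c(Suc m := 0)) m" using c(2) by (simp add: vanishes_above_def)
      then show ?thesis using 1 twos_closed_Suc_if_vanishes by blast
    qed (use c twos_closed_upd_1 in auto)
  qed
qed

lemma CG_admissible_eq_if_value_eq: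
  "CG_admissible c \<Longrightarrow> CG_admissible d \<Longrightarrow> vanishes_above c m \<Longrightarrow> vanishes_above d m \<Longrightarrow>
    CG_value c m = CG_value d m \<Longrightarrow> c = d"
proof (induction m arbitrary: c d)
  case 0
  then show ?case by (auto simp: CG_admissible_def vanishes_above_def fun_eq_iff) (metis gr0I)
next
  case (Suc m)
  define G where "G = even_fib (Suc m)"
  have val: "c (Suc m) * G + CG_value c m = d (Suc m) * G + CG_value d m"
    using Suc.prems(5) by (simp add: CG_value_Suc G_def)
  have "CG_value c m < G" "CG_value d m < G" using CG_value_bound Suc.prems(1,2) by (auto simp: G_def)
  then have top: "c (Suc m) = d (Suc m)"
    using arg_cong[OF val, of "\<lambda>x. x div G"] by simp
  have "c(Suc m := 0) = d(Suc m := 0)"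
  proof (rule Suc.IH)
    show "CG_admissible (c(Suc m := 0))" "CG_admissible (d(Suc m := 0))"
      using Suc.prems CG_admissible_upd_0 by auto
    show "vanishes_above (c(Suc m := 0)) m" "vanishes_above (d(Suc m := 0)) m"
      using Suc.prems(3,4) by (auto simp: vanishes_above_def)
    show "CG_value (c(Suc m := 0)) m = CG_value (d(Suc m := 0)) m"
      using val top unfolding CG_value_def by (simp add: G_def)
  qed
  then show ?case using top by (metis fun_upd_triv fun_upd_upd)
qed

lemma CG_value_eq_sum_support:
  assumes "c 0 = 0" "vanishes_above c m"
  shows "CG_value c m = (\<Sum>i\<in>{i. c i \<noteq> 0}. c i * fib (2 * i))"
proof -
  have "{i. c i \<noteq> 0} \<subseteq> {1..m}"
  proof
    fix i assume "i \<in> {i. c i \<noteq> 0}"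
    then have "i \<noteq> 0" using assms(1) by (metis mem_Collect_eq)
    moreover have "\<not> m < i" using \<open>i \<in> _\<close> assms(2) unfolding vanishes_above_def by (metis mem_Collect_eq)
    ultimately show "i \<in> {1..m}" by simp
  qed
  then have "(\<Sum>i\<in>{i. c i \<noteq> 0}. c i * fib (2 * i)) = (\<Sum>i=1..m. c i * fib (2 * i))"
    by (intro sum.mono_neutral_left) auto
  then show ?thesis by (simp add: CG_value_def even_fib_def)
qed

lemma finite_support_if_vanishes: "vanishes_above c m \<Longrightarrow> finite {i. c i \<noteq> 0}"
  unfolding vanishes_above_def by (rule finite_subset[of _ "{..m}"]) (auto intro: leI)

lemma is_CG_rep_iff:
  "is_CG_rep n c \<longleftrightarrow> CG_admissible c \<and> (\<exists>m. vanishes_above c m \<and> CG_value c m = n)"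
proof
  assume rep: "is_CG_rep n c"
  then have adm: "CG_admissible c" by (simp add: is_CG_rep_def CG_admissible_def)
  have "finite {i. c i \<noteq> 0}" using rep by (simp add: is_CG_rep_def)
  then obtain m where "\<forall>i\<in>{i. c i \<noteq> 0}. i \<le> m"
    using finite_nat_set_iff_bounded_le by blast
  then have van: "vanishes_above c m" unfolding vanishes_above_def by (meson mem_Collect_eq not_le)
  have "CG_value c m = n"
    using rep CG_value_eq_sum_support[OF _ van] by (simp add: is_CG_rep_def)
  with adm van show "CG_admissible c \<and> (\<exists>m. vanishes_above c m \<and> CG_value c m = n)" by blast
next
  assume "CG_admissible c \<and> (\<exists>m. vanishes_above c m \<and> CG_value c m = n)"
  then obtain m where adm: "CG_admissible c" and van: "vanishes_above c m" and val: "CG_value c m = n"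
    by blast
  have "c 0 = 0" using adm by (simp add: CG_admissible_def)
  then have "n = (\<Sum>i\<in>{i. c i \<noteq> 0}. c i * fib (2 * i))"
    using CG_value_eq_sum_support van val by simp
  then show "is_CG_rep n c"
    using adm finite_support_if_vanishes[OF van] by (simp add: is_CG_rep_def CG_admissible_def)
qed

lemma CG_coeffs_CG_value:
  assumes "CG_admissible c" "vanishes_above c m"
  shows "CG_coeffs (CG_value c m) = c"
  unfolding CG_coeffs_def
proof (rule the_equality)
  show "is_CG_rep (CG_value c m) c" using assms is_CG_rep_iff by blast
  fix d assume "is_CG_rep (CG_value c m) d"
  then obtain m' where d: "CG_admissible d" "vanishes_above d m'" "CG_value d m' = CG_value c m"
    using is_CG_rep_iff by blast
  define M where "M = max m m'"
  have "vanishes_above c M" "vanishes_above d M"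
    using assms(2) d(2) by (auto simp: vanishes_above_def M_def)
  moreover have "c 0 = 0" "d 0 = 0" using assms(1) d(1) by (auto simp: CG_admissible_def)
  ultimately have "CG_value d M = CG_value c M"
    using d assms CG_value_eq_sum_support by simp
  then show "d = c"
    using CG_admissible_eq_if_value_eq d(1) assms(1) \<open>vanishes_above c M\<close> \<open>vanishes_above d M\<close>
    by blast
qed

lemma CG_value_mem_A_iff:
  assumes "CG_admissible c" "vanishes_above c m"
  shows "CG_value c m \<in> A k \<longleftrightarrow> 1 \<le> k \<and> c k \<noteq> 0 \<and> (\<forall>i<k. c i = 0)"
proof -
  define I where "I = {i. c i \<noteq> 0}"
  have index_pos: "c i \<noteq> 0 \<Longrightarrow> 1 \<le> i" for i
    using assms(1) by (cases i) (auto simp: CG_admissible_def)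
  have CG_eq: "CG (CG_value c m) = even_fib ` I"
    unfolding CG_def CG_coeffs_CG_value[OF assms] I_def even_fib_def using index_pos by blast
  have "finite I" using finite_support_if_vanishes[OF assms(2)] by (simp add: I_def)
  \<comment> \<open>The condition 1 \<le> n in A excludes n = 0, where CG n = {} and Min is a junk value.\<close>
  have pos_iff: "1 \<le> CG_value c m \<longleftrightarrow> I \<noteq> {}"
  proof
    assume "1 \<le> CG_value c m"
    moreover have "CG_value c m = 0" if "I = {}"
      using that unfolding CG_value_def I_def by (intro sum.neutral) auto
    ultimately show "I \<noteq> {}" by linarith
  next
    assume "I \<noteq> {}"
    then obtain i where i: "c i \<noteq> 0" by (auto simp: I_def)
    then have "1 \<le> i" "i \<le> m"
      using index_pos assms(2) unfolding vanishes_above_def by (blast, meson not_le)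
    moreover have "1 \<le> c i * even_fib i" using i even_fib_pos[OF \<open>1 \<le> i\<close>] by (simp add: Suc_le_eq)
    ultimately show "1 \<le> CG_value c m" using CG_value_ge[of i m c] by linarith
  qed
  have "CG_value c m \<in> A k \<longleftrightarrow> I \<noteq> {} \<and> Min (even_fib ` I) = even_fib k"
    unfolding A_def using CG_eq pos_iff by (simp add: even_fib_def)
  also have "\<dots> \<longleftrightarrow> I \<noteq> {} \<and> Min I = k"
    using mono_Min_commute[OF strict_mono_mono[OF strict_mono_even_fib] \<open>finite I\<close>]
    by (metis even_fib_eq_iff)
  also have "\<dots> \<longleftrightarrow> k \<in> I \<and> (\<forall>i\<in>I. k \<le> i)"
    using Min_eq_iff[OF \<open>finite I\<close>, of k] by blast
  also have "\<dots> \<longleftrightarrow> 1 \<le> k \<and> c k \<noteq> 0 \<and> (\<forall>i<k. c i = 0)"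
  proof -
    have "(\<forall>i\<in>I. k \<le> i) \<longleftrightarrow> (\<forall>i<k. c i = 0)" unfolding I_def by (meson mem_Collect_eq not_le)
    then show ?thesis using index_pos by (auto simp: I_def)
  qed
  finally show ?thesis .
qed

lemma mem_A_add_even_fib_iff:
  assumes "k \<le> m" "v \<le> 2" "n < even_fib (Suc m)" "v = 2 \<Longrightarrow> n \<le> even_fib_sum m"
  shows "v * even_fib (Suc m) + n \<in> A k \<longleftrightarrow> n \<in> A k"
proof -
  obtain c where c: "CG_admissible c" "vanishes_above c m" "CG_value c m = n"
      "n \<le> even_fib_sum m \<longrightarrow> twos_closed c m"
    using CG_rep_exists[OF assms(3)] by blast
  have "CG_admissible (c(Suc m := v))" using CG_admissible_extend c assms(2,4) by blast
  moreover have "vanishes_above (c(Suc m := v)) (Suc m)" using vanishes_above_upd c(2) .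
  moreover have "CG_value (c(Suc m := v)) (Suc m) = v * even_fib (Suc m) + n"
    using CG_value_upd c(3) by simp
  ultimately have "v * even_fib (Suc m) + n \<in> A k \<longleftrightarrow>
      1 \<le> k \<and> (c(Suc m := v)) k \<noteq> 0 \<and> (\<forall>i<k. (c(Suc m := v)) i = 0)"
    using CG_value_mem_A_iff by metis
  also have "\<dots> \<longleftrightarrow> 1 \<le> k \<and> c k \<noteq> 0 \<and> (\<forall>i<k. c i = 0)" using assms(1) by auto
  also have "\<dots> \<longleftrightarrow> n \<in> A k" using CG_value_mem_A_iff[OF c(1,2), of k] unfolding c(3) by simp
  finally show ?thesis .
qed

lemma A_translate:
  assumes "k \<le> m"
  shows "n < even_fib (Suc m) \<Longrightarrow> even_fib (Suc m) + n \<in> A k \<longleftrightarrow> n \<in> A k"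
    and "n < Suc (even_fib_sum m) \<Longrightarrow> 2 * even_fib (Suc m) + n \<in> A k \<longleftrightarrow> n \<in> A k"
  using mem_A_add_even_fib_iff[OF assms, of 1 n] mem_A_add_even_fib_iff[OF assms, of 2 n]
    even_fib_sum_less[of m] by simp_all

lemma even_fib_mem_A:
  assumes "1 \<le> k" "1 \<le> v" "v \<le> 2"
  shows "v * even_fib k \<in> A k"
proof -
  obtain m where k: "k = Suc m" using assms(1) by (cases k) auto
  have zero: "CG_admissible (\<lambda>_. 0)" "vanishes_above (\<lambda>_. 0) m" "twos_closed (\<lambda>_. 0) m"
    by (simp_all add: CG_admissible_def vanishes_above_def twos_closed_def)
  have "CG_value ((\<lambda>_. 0)(Suc m := v)) (Suc m) \<in> A k"
    using CG_admissible_extend[OF zero(1,2) assms(3) zero(3)] vanishes_above_upd[OF zero(2)]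
      CG_value_mem_A_iff assms(1,2) k by auto
  then show ?thesis using CG_value_upd[of "\<lambda>_. 0"] k by (simp add: CG_value_def)
qed

lemma infinite_A:
  assumes "1 \<le> k"
  shows "infinite (A k)"
  unfolding infinite_nat_iff_unbounded_le
proof
  fix N
  define m where "m = max k N"
  have "even_fib k < even_fib (Suc m)" by (simp add: m_def)
  then have "even_fib (Suc m) + even_fib k \<in> A k"
    using A_translate(1)[of k m] even_fib_mem_A[OF assms, of 1] by (simp add: m_def)
  moreover have "N \<le> even_fib (Suc m) + even_fib k"
    using strict_mono_imp_increasing[OF strict_mono_even_fib, of "Suc m"] by (simp add: m_def)
  ultimately show "\<exists>y\<ge>N. y \<in> A k" by blast
qed

lemma A_below_even_fib_Suc:
  assumes "1 \<le> k"
  shows "{y \<in> A k. y < even_fib (Suc k)} = {even_fib k, 2 * even_fib k}"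
proof
  have "2 * even_fib k < even_fib (Suc k)"
    using even_fib_sum_eq[of k] assms by (cases k) (auto simp: even_fib_sum_Suc)
  then show "{even_fib k, 2 * even_fib k} \<subseteq> {y \<in> A k. y < even_fib (Suc k)}"
    using even_fib_mem_A[OF assms, of 1] even_fib_mem_A[OF assms, of 2] by auto
  show "{y \<in> A k. y < even_fib (Suc k)} \<subseteq> {even_fib k, 2 * even_fib k}"
  proof
    fix y assume y: "y \<in> {y \<in> A k. y < even_fib (Suc k)}"
    then obtain c where c: "CG_admissible c" "vanishes_above c k" "CG_value c k = y"
      using CG_rep_exists by blast
    obtain m where k: "k = Suc m" using assms by (cases k) auto
    have "c k \<noteq> 0" "\<forall>i<k. c i = 0" using CG_value_mem_A_iff[OF c(1,2), of k] c(3) y by auto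
    moreover have "CG_value c m = 0" unfolding CG_value_def using \<open>\<forall>i<k. c i = 0\<close> k by simp
    moreover have "c k \<le> 2" using c(1) by (simp add: CG_admissible_def)
    ultimately show "y \<in> {even_fib k, 2 * even_fib k}"
      using c(3) k by (cases "c k"; cases "c k - 1") (auto simp: CG_value_Suc)
  qed
qed

lemma A_le_even_fib_sum:
  assumes "1 \<le> k"
  shows "{y \<in> A k. y < Suc (even_fib_sum k)} = {even_fib k}"
proof -
  obtain m where k: "k = Suc m" using assms by (cases k) auto
  have below: "even_fib k \<le> even_fib_sum k" "even_fib_sum k < 2 * even_fib k"
    using even_fib_sum_less[of m] k by (simp_all add: even_fib_sum_Suc)
  have "{y \<in> A k. y < Suc (even_fib_sum k)} =
      {y \<in> A k. y < even_fib (Suc k)} \<inter> {..<Suc (even_fib_sum k)}"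
    using even_fib_sum_less[of k] by auto
  also have "\<dots> = {even_fib k}"
    unfolding A_below_even_fib_Suc[OF assms] using below by auto
  finally show ?thesis .
qed

lemma card_below_A_double:
  assumes "k \<le> m"
  shows "card_below (A k) (2 * even_fib (Suc m)) = 2 * card_below (A k) (even_fib (Suc m))"
  using card_below_translate[of "even_fib (Suc m)" "even_fib (Suc m)" "A k"] A_translate(1)[OF assms]
  by (simp add: mult_2)

text \<open>Since F(2m+4) = 2 F(2m+2) + (F(2) + ... + F(2m)) + 1, the part of A k below F(2m+4) is the
  union of the translates by 0, F(2m+2) and 2 F(2m+2) of its parts below F(2m+2), below F(2m+2)
  and up to F(2) + ... + F(2m); this gives the Fibonacci recursion of the counts.\<close>
lemma card_below_A:
  assumes "1 \<le> k"
  shows "card_below (A k) (even_fib (Suc (k + d))) = fib (2 * Suc d + 1) \<and>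
    card_below (A k) (Suc (even_fib_sum (k + d))) = fib (2 * Suc d)"
proof (induction d)
  case 0
  have "fib 3 = 2" by (simp add: numeral_3_eq_3)
  moreover have "even_fib k \<noteq> 2 * even_fib k" using even_fib_pos[OF assms] by simp
  ultimately show ?case
    using A_below_even_fib_Suc[OF assms] A_le_even_fib_sum[OF assms] by (simp add: card_below_def)
next
  case (Suc d)
  define m where "m = k + d"
  define P where "P = even_fib (Suc m)"
  have km: "k \<le> m" by (simp add: m_def)
  have top: "even_fib (Suc (Suc m)) = 2 * P + Suc (even_fib_sum m)"
    using even_fib_sum_eq[of "Suc m"] by (simp add: even_fib_sum_Suc P_def)
  have sum_less: "Suc (even_fib_sum m) \<le> P" using even_fib_sum_less[of m] by (simp add: P_def)
  have "card_below (A k) (even_fib (Suc (Suc m))) =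
      card_below (A k) (2 * P) + card_below (A k) (Suc (even_fib_sum m))"
    unfolding top by (rule card_below_translate) (use A_translate(2)[OF km] P_def in simp)
  moreover have "card_below (A k) (Suc (even_fib_sum (Suc m))) =
      card_below (A k) P + card_below (A k) (Suc (even_fib_sum m))"
    using card_below_translate[of "Suc (even_fib_sum m)" P "A k"] A_translate(1)[OF km] sum_less
    by (simp add: even_fib_sum_Suc P_def add.commute)
  moreover have "card_below (A k) P = fib (2 * Suc d + 1)"
    and "card_below (A k) (Suc (even_fib_sum m)) = fib (2 * Suc d)"
    using Suc.IH by (simp_all add: m_def P_def)
  moreover have "k + Suc d = Suc m" by (simp add: m_def)
  ultimately show ?case
    using card_below_A_double[OF km] fib_odd_Suc[of "Suc d"] fib_even_Suc[of "Suc d"]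
    by (simp add: P_def)
qed

lemma q_shift:
  assumes "1 \<le> k" "1 \<le> l" "1 \<le> i"
  shows "i \<le> fib (2 * l + 1) \<Longrightarrow> q k (fib (2 * l + 1) + i) = even_fib (k + l) + q k i"
    and "i \<le> fib (2 * l) \<Longrightarrow> q k (2 * fib (2 * l + 1) + i) = 2 * even_fib (k + l) + q k i"
proof -
  obtain d where l: "l = Suc d" using assms(2) by (cases l) auto
  define m where "m = k + d"
  have km: "k \<le> m" and top: "k + l = Suc m" by (simp_all add: m_def l)
  have inf: "infinite (A k)" using infinite_A[OF assms(1)] .
  have counts: "card_below (A k) (even_fib (Suc m)) = fib (2 * l + 1)"
      "card_below (A k) (Suc (even_fib_sum m)) = fib (2 * l)"
    using card_below_A[OF assms(1), of d] by (simp_all add: l m_def)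
  have q_add: "q k (N + i) = enumerate (A k) (N + (i - 1))" for N
    using assms(3) by (simp add: q_def)
  show "q k (fib (2 * l + 1) + i) = even_fib (k + l) + q k i" if "i \<le> fib (2 * l + 1)"
  proof -
    have "i - 1 < card_below (A k) (even_fib (Suc m))" using counts(1) that assms(3) by simp
    from enumerate_translate[OF inf A_translate(1)[OF km] this]
    show ?thesis unfolding q_add top counts(1) by (simp add: q_def)
  qed
  show "q k (2 * fib (2 * l + 1) + i) = 2 * even_fib (k + l) + q k i" if "i \<le> fib (2 * l)"
  proof -
    have "i - 1 < card_below (A k) (Suc (even_fib_sum m))" using counts(2) that assms(3) by simp
    from enumerate_translate[OF inf A_translate(2)[OF km] this]
    show ?thesis unfolding q_add top card_below_A_double[OF km] counts(1) by (simp add: q_def)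
  qed
qed

lemma gap_eq_of_block_translation:
  fixes f :: "nat \<Rightarrow> nat"
  assumes shift: "\<And>i. 1 \<le> i \<Longrightarrow> i \<le> F \<Longrightarrow> f (F + i) = P + f i"
    and shift2: "\<And>i. 1 \<le> i \<Longrightarrow> i \<le> F' \<Longrightarrow> f (2 * F + i) = 2 * P + f i"
    and "F' \<le> F" "F + 1 \<le> j" "j + 1 \<le> 2 * F + F'"
  shows "int (f (j + 1)) - int (f j) = int (f (j - F + 1)) - int (f (j - F))"
proof -
  consider "j + 1 \<le> 2 * F" | "j = 2 * F" | "2 * F < j" by linarith
  then show ?thesis
  proof cases
    case 1
    have "f j = P + f (j - F)" "f (j + 1) = P + f (j - F + 1)"
      using shift[of "j - F"] shift[of "j - F + 1"] assms(4) 1 by simp_all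
    then show ?thesis by simp
  next
    case 2
    have "f j = P + f F" "f (j + 1) = 2 * P + f 1" "f (F + 1) = P + f 1"
      using shift[of F] shift2[of 1] shift[of 1] assms(3,5) 2 by (simp_all add: mult_2)
    moreover have "j - F = F" using 2 by simp
    ultimately show ?thesis by simp
  next
    case 3
    define i where "i = j - 2 * F"
    have i: "1 \<le> i" "i + 1 \<le> F'" "j = 2 * F + i" "j - F = F + i"
      using 3 assms(5) by (simp_all add: i_def)
    have "f j = 2 * P + f i" "f (j + 1) = 2 * P + f (i + 1)"
      "f (j - F) = P + f i" "f (j - F + 1) = P + f (i + 1)"
      using shift2[of i] shift2[of "i + 1"] shift[of i] shift[of "i + 1"] i assms(3)
      by (simp_all add: add.assoc)
    then show ?thesis by simp
  qed
qed

theorem proposition4p1: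
  fixes k l j :: nat
  assumes "1 \<le> k" and "1 \<le> l"
    and "1 + fib (2 * l + 1) \<le> j" and "j \<le> fib (2 * l + 3) - 1"
  shows "int (q k (j + 1)) - int (q k j) =
         int (q k (j - fib (2 * l + 1) + 1)) - int (q k (j - fib (2 * l + 1)))"
proof (rule gap_eq_of_block_translation)
  show "q k (fib (2 * l + 1) + i) = even_fib (k + l) + q k i"
    if "1 \<le> i" "i \<le> fib (2 * l + 1)" for i
    using q_shift(1)[OF assms(1,2) that(1)] that(2) .
  show "q k (2 * fib (2 * l + 1) + i) = 2 * even_fib (k + l) + q k i"
    if "1 \<le> i" "i \<le> fib (2 * l)" for i
    using q_shift(2)[OF assms(1,2) that(1)] that(2) .
  show "fib (2 * l) \<le> fib (2 * l + 1)" by (rule fib_mono) simp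
  have "fib (2 * l + 3) = 2 * fib (2 * l + 1) + fib (2 * l)"
    using fib_odd_Suc[of l] by (simp add: numeral_3_eq_3)
  then show "fib (2 * l + 1) + 1 \<le> j" "j + 1 \<le> 2 * fib (2 * l + 1) + fib (2 * l)"
    using assms(3,4) by simp_all
qed

end
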